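(* Let $S$ be a closed hyperbolic surface and $\gamma \subset S$ a closed geodesic. Let $\alpha,\beta$ be two complete geodesics in the hyperbolic plane $\mathbb{H}^2$ (the universal cover of $S$), both projecting to $\gamma$ under the covering projection, which cross transversely at a point $p$ that projects to a self-intersection of $\gamma$. Let $\epsilon>0$ be such that $8\epsilon$ is less than the length of the shortest nontrivial closed curve on $S$, and let $\alpha_\epsilon,\beta_\epsilon$ be the $\epsilon$-trap for $p$. Then $\operatorname{length}(\alpha_\epsilon) < \operatorname{length}(\gamma) + 4\epsilon$, and similarly $\operatorname{length}(\beta_\epsilon) < \operatorname{length}(\gamma) + 4\epsilon$.
   Context: For two complete geodesics $\alpha,\beta$ in $\mathbb{H}^2$ crossing transversely at $p$ and $\epsilon>0$, $\alpha_\epsilon$ denotes the subset (segment) of $\alpha$ consisting of points lying in the $2\epsilon$-neighborhood of $\beta$, and similarly $\beta_\epsilon$ is the segment of $\beta$ in the $2\epsilon$-neighborhood of $\alpha$. The pair $\alpha_\epsilon,\beta_\epsilon$ is called the $\epsilon$-trap for $p$. *)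

theory Defs
  imports "HOL-Analysis.Analysis"
begin

definition hplane :: "complex set" where
  "hplane = {z. Im z > 0}"

definition hdist :: "complex \<Rightarrow> complex \<Rightarrow> real" where
  "hdist z w = arcosh (1 + (cmod (z - w))\<^sup>2 / (2 * Im z * Im w))"

text \<open>Elements of SL(2,R), written (a,b,c,d), acting by Moebius transformations.\<close>

type_synonym sl2 = "real \<times> real \<times> real \<times> real"

definition mob :: "sl2 \<Rightarrow> complex \<Rightarrow> complex" where
  "mob m z = (case m of (a,b,c,d) \<Rightarrow>
      (of_real a * z + of_real b) / (of_real c * z + of_real d))"

definition sl2_mult :: "sl2 \<Rightarrow> sl2 \<Rightarrow> sl2" where
  "sl2_mult m n = (case m of (a,b,c,d) \<Rightarrow> case n of (a',b',c',d') \<Rightarrow>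
      (a*a' + b*c', a*b' + b*d', c*a' + d*c', c*b' + d*d'))"

definition sl2_inv :: "sl2 \<Rightarrow> sl2" where
  "sl2_inv m = (case m of (a,b,c,d) \<Rightarrow> (d, -b, -c, a))"

definition sl2_one :: sl2 where
  "sl2_one = (1, 0, 0, 1)"

text \<open>A group of Moebius transformations uniformizing a closed hyperbolic surface
  S = H^2 / Gamma: a subgroup of SL(2,R) acting properly discontinuously (discretely),
  freely, and cocompactly on the hyperbolic plane.\<close>

definition closed_surface_group :: "sl2 set \<Rightarrow> bool" where
  "closed_surface_group G \<longleftrightarrow>
     (\<forall>m\<in>G. case m of (a,b,c,d) \<Rightarrow> a*d - b*c = 1) \<and>
     sl2_one \<in> G \<and>
     (\<forall>m\<in>G. \<forall>n\<in>G. sl2_mult m n \<in> G) \<and>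
     (\<forall>m\<in>G. sl2_inv m \<in> G) \<and>
     (\<forall>z\<in>hplane. \<forall>r. finite {m\<in>G. hdist z (mob m z) \<le> r}) \<and>
     (\<forall>m\<in>G. \<forall>z\<in>hplane. mob m z = z \<longrightarrow> (\<forall>w\<in>hplane. mob m w = w)) \<and>
     (\<exists>R. \<forall>z\<in>hplane. \<forall>w\<in>hplane. \<exists>m\<in>G. hdist z (mob m w) \<le> R)"

definition nontrivial_elt :: "sl2 \<Rightarrow> bool" where
  "nontrivial_elt m \<longleftrightarrow> (\<exists>z\<in>hplane. mob m z \<noteq> z)"

text \<open>Length of the shortest homotopically nontrivial closed curve on S = H^2/G
  (the systole): the infimum of displacements of nontrivial deck transformations.\<close>

definition systole :: "sl2 set \<Rightarrow> real" where
  "systole G = Inf {hdist z (mob m z) | m z. m \<in> G \<and> nontrivial_elt m \<and> z \<in> hplane}"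

definition unit_geodesic :: "(real \<Rightarrow> complex) \<Rightarrow> bool" where
  "unit_geodesic c \<longleftrightarrow> (\<forall>t. c t \<in> hplane) \<and> (\<forall>s t. hdist (c s) (c t) = \<bar>s - t\<bar>)"

definition trap :: "complex set \<Rightarrow> complex set \<Rightarrow> real \<Rightarrow> complex set" where
  "trap A B \<epsilon> = {x \<in> A. \<exists>y\<in>B. hdist x y < 2 * \<epsilon>}"

definition seg_length :: "complex set \<Rightarrow> real" where
  "seg_length X = Sup {hdist x y | x y. x \<in> X \<and> y \<in> X}"

end

theory Submission
  imports Defs
begin

(* Normalise the two lifts so that they cross at i, beta is the imaginary axis parametrised by
   t |-> i e^t, and alpha is its image under the rotation (a, b, -b, a) about i.  The point of
   alpha at parameter t has distance arsinh (2 |a b| |sinh t|) from beta, so it lies in the trap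
   only if 2 |a b| |sinh t| < sinh (2 eps).  The deck transformations Ta, Tb conjugate to the
   translation of gamma translate alpha and beta by l; the element Tb^-1 Ta (or Tb Ta) moves the
   point of alpha at parameter -l/2 by a distance d with
   sinh (d/4) = min (|a|, |b|) sinh (l/2) <= sqrt 2 |a b| sinh (l/2).
   It is nontrivial, so d is at least the systole, which exceeds 8 eps.  Combining the two
   estimates, the trap on alpha lies in the parameter interval (-l/2, l/2), so its length is at
   most l. *)

section \<open>Hyperbolic distance and Moebius transformations\<close>

definition cosh_dist :: "complex \<Rightarrow> complex \<Rightarrow> real" where
  "cosh_dist z w = 1 + (cmod (z - w))\<^sup>2 / (2 * Im z * Im w)"

lemma cosh_dist_ge_1: "Im z > 0 \<Longrightarrow> Im w > 0 \<Longrightarrow> cosh_dist z w \<ge> 1"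
  unfolding cosh_dist_def by simp

lemma cosh_dist_coords:
  "cosh_dist z w = 1 + ((Re z - Re w)^2 + (Im z - Im w)^2) / (2 * Im z * Im w)"
  unfolding cosh_dist_def by (simp add: cmod_power2)

lemma cosh_hdist: "Im z > 0 \<Longrightarrow> Im w > 0 \<Longrightarrow> cosh (hdist z w) = cosh_dist z w"
  unfolding hdist_def cosh_dist_def[symmetric] using cosh_dist_ge_1 by simp

lemma hdist_nonneg: "Im z > 0 \<Longrightarrow> Im w > 0 \<Longrightarrow> hdist z w \<ge> 0"
  unfolding hdist_def cosh_dist_def[symmetric] using cosh_dist_ge_1 by simp

lemma hdist_self: "hdist z z = 0"
  unfolding hdist_def by simp

lemma hdist_less_iff:
  "Im z > 0 \<Longrightarrow> Im w > 0 \<Longrightarrow> r \<ge> 0 \<Longrightarrow> hdist z w < r \<longleftrightarrow> cosh_dist z w < cosh r"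
  by (metis cosh_hdist cosh_real_nonneg_less_iff hdist_nonneg)

lemma hdist_eq_iff:
  "Im z > 0 \<Longrightarrow> Im w > 0 \<Longrightarrow> r \<ge> 0 \<Longrightarrow> hdist z w = r \<longleftrightarrow> cosh_dist z w = cosh r"
  by (metis cosh_hdist cosh_real_nonneg_le_iff hdist_nonneg order.antisym order_refl)

lemma cosh_eq_exp: "cosh (s::real) = (exp s + inverse (exp s)) / 2"
  by (simp add: cosh_def exp_minus)

lemma sinh_eq_exp: "sinh (s::real) = (exp s - inverse (exp s)) / 2"
  by (simp add: sinh_def exp_minus)

lemma cosh_times_4: "cosh (4 * (y::real)) = 1 + 8 * (sinh y)^2 * (1 + (sinh y)^2)"
proof -
  have cosh_double': "cosh (2 * x) = 1 + 2 * (sinh x)^2" for x :: real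
    using cosh_double[of x] cosh_square_eq[of x] by simp
  have "cosh (4 * y) = 1 + 2 * (sinh (2 * y))^2"
    using cosh_double'[of "2 * y"] by simp
  also have "\<dots> = 1 + 8 * (sinh y)^2 * (cosh y)^2"
    by (simp add: sinh_double power_mult_distrib)
  finally show ?thesis using cosh_square_eq[of y] by simp
qed

definition unimodular :: "sl2 \<Rightarrow> bool" where
  "unimodular m \<longleftrightarrow> (case m of (a,b,c,d) \<Rightarrow> a*d - b*c = 1)"

lemma mob_denom_nonzero:
  assumes "a*d - b*c = 1" "Im z > 0"
  shows "of_real c * z + of_real d \<noteq> 0"
proof
  assume h: "of_real c * z + of_real d = 0"
  then have "Im (of_real c * z + of_real d) = 0" by simp
  then have "c = 0" using assms(2) by simp
  then have "d = 0" using h by simp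
  then show False using assms(1) \<open>c = 0\<close> by simp
qed

lemma Im_mob:
  assumes "a*d - b*c = 1" "Im z > 0"
  shows "Im (mob (a,b,c,d) z) = Im z / (cmod (of_real c * z + of_real d))\<^sup>2"
proof -
  have "(cmod (of_real c * z + of_real d))\<^sup>2
      = (Re (of_real c * z + of_real d))\<^sup>2 + (Im (of_real c * z + of_real d))\<^sup>2"
    by (rule cmod_power2)
  moreover have "a * (d * Im z) - b * (c * Im z) = Im z"
    using assms(1) by (metis mult.assoc mult.commute mult_1 left_diff_distrib)
  ultimately show ?thesis unfolding mob_def
    by (simp add: Im_divide power2_eq_square algebra_simps)
qed

lemma Im_mob_pos:
  assumes "unimodular m" "Im z > 0" shows "Im (mob m z) > 0"
proof -
  obtain a b c d where m: "m = (a,b,c,d)" by (cases m) auto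
  have det: "a*d - b*c = 1" using assms(1) m by (simp add: unimodular_def)
  show ?thesis using mob_denom_nonzero[OF det assms(2)] Im_mob[OF det assms(2)] m assms(2) by simp
qed

lemma mob_diff:
  assumes "a*d - b*c = 1" "Im z > 0" "Im w > 0"
  shows "mob (a,b,c,d) z - mob (a,b,c,d) w
    = (z - w) / ((of_real c * z + of_real d) * (of_real c * w + of_real d))"
proof -
  have nz: "of_real c * z + of_real d \<noteq> 0" "of_real c * w + of_real d \<noteq> 0"
    using mob_denom_nonzero assms by blast+
  have "(of_real a * of_real d - of_real b * of_real c :: complex) = 1"
    using arg_cong[OF assms(1), of complex_of_real] by simp
  then have num: "(of_real a * z + of_real b) * (of_real c * w + of_real d)
      - (of_real a * w + of_real b) * (of_real c * z + of_real d) = z - w"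
    by (simp add: algebra_simps)
  show ?thesis unfolding mob_def using nz by (simp add: diff_frac_eq num)
qed

lemma cosh_dist_mob:
  assumes "unimodular m" "Im z > 0" "Im w > 0"
  shows "cosh_dist (mob m z) (mob m w) = cosh_dist z w"
proof -
  obtain a b c d where m: "m = (a,b,c,d)" by (cases m) auto
  have det: "a*d - b*c = 1" using assms(1) m by (simp add: unimodular_def)
  define Dz where "Dz = cmod (of_real c * z + of_real d)"
  define Dw where "Dw = cmod (of_real c * w + of_real d)"
  have pos: "Dz > 0" "Dw > 0"
    using mob_denom_nonzero[OF det assms(2)] mob_denom_nonzero[OF det assms(3)] Dz_def Dw_def by auto
  have "cmod (mob m z - mob m w) = cmod (z - w) / (Dz * Dw)"
    using mob_diff[OF det assms(2,3)] m by (simp add: Dz_def Dw_def norm_divide norm_mult)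
  moreover have "Im (mob m z) = Im z / Dz^2" "Im (mob m w) = Im w / Dw^2"
    using Im_mob[OF det assms(2)] Im_mob[OF det assms(3)] m Dz_def Dw_def by auto
  ultimately have "cosh_dist (mob m z) (mob m w)
      = 1 + (cmod (z - w) / (Dz * Dw))^2 / (2 * (Im z / Dz^2) * (Im w / Dw^2))"
    unfolding cosh_dist_def by simp
  also have "\<dots> = cosh_dist z w"
    unfolding cosh_dist_def using pos by (simp add: field_simps power2_eq_square)
  finally show ?thesis .
qed

lemma hdist_mob:
  assumes "unimodular m" "Im z > 0" "Im w > 0"
  shows "hdist (mob m z) (mob m w) = hdist z w"
  using cosh_dist_mob[OF assms] unfolding hdist_def cosh_dist_def by simp

lemma unimodular_mult: "unimodular m \<Longrightarrow> unimodular n \<Longrightarrow> unimodular (sl2_mult m n)"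
proof -
  assume "unimodular m" "unimodular n"
  moreover obtain a b c d where m: "m = (a,b,c,d)" by (cases m) auto
  moreover obtain a' b' c' d' where n: "n = (a',b',c',d')" by (cases n) auto
  moreover have "(a * a' + b * c') * (c * b' + d * d') - (a * b' + b * d') * (c * a' + d * c')
      = (a*d - b*c) * (a'*d' - b'*c')"
    by (simp add: algebra_simps)
  ultimately show ?thesis unfolding unimodular_def sl2_mult_def by simp
qed

lemma unimodular_inv: "unimodular m \<Longrightarrow> unimodular (sl2_inv m)"
  unfolding unimodular_def sl2_inv_def by (cases m) (simp add: mult.commute)

lemma mob_sl2_mult:
  assumes "unimodular n" "Im z > 0"
  shows "mob (sl2_mult m n) z = mob m (mob n z)"
proof -
  obtain a b c d where m: "m = (a,b,c,d)" by (cases m) auto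
  obtain a' b' c' d' where n: "n = (a',b',c',d')" by (cases n) auto
  have "a'*d' - b'*c' = 1" using assms(1) n by (simp add: unimodular_def)
  then have D: "of_real c' * z + of_real d' \<noteq> 0" using mob_denom_nonzero assms(2) by blast
  have frac: "(of_real x * (N / D) + of_real y) / (of_real u * (N / D) + of_real v)
      = (of_real x * N + of_real y * D) / (of_real u * N + of_real v * D)"
    if "D \<noteq> 0" for x y u v :: real and N D :: complex
  proof -
    have "of_real x * (N / D) + of_real y = (of_real x * N + of_real y * D) / D"
      "of_real u * (N / D) + of_real v = (of_real u * N + of_real v * D) / D"
      using that by (simp_all add: field_simps)
    then show ?thesis using that by simp
  qed
  have "mob m (mob n z)
      = (of_real a * (of_real a' * z + of_real b') + of_real b * (of_real c' * z + of_real d'))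
        / (of_real c * (of_real a' * z + of_real b') + of_real d * (of_real c' * z + of_real d'))"
    unfolding m n mob_def using frac[OF D] by simp
  also have "\<dots> = mob (sl2_mult m n) z"
    unfolding m n mob_def sl2_mult_def by (simp add: algebra_simps)
  finally show ?thesis by simp
qed

lemma mob_inv_left:
  assumes "unimodular m" "Im z > 0"
  shows "mob (sl2_inv m) (mob m z) = z"
proof -
  have "sl2_mult (sl2_inv m) m = sl2_one"
    using assms(1) unfolding unimodular_def sl2_mult_def sl2_inv_def sl2_one_def
    by (cases m) (auto simp: mult.commute)
  moreover have "mob sl2_one z = z" unfolding mob_def sl2_one_def by simp
  ultimately show ?thesis using mob_sl2_mult[OF assms, of "sl2_inv m"] by simp
qed

lemma mob_inv_right:
  assumes "unimodular m" "Im z > 0"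
  shows "mob m (mob (sl2_inv m) z) = z"
proof -
  have "sl2_mult m (sl2_inv m) = sl2_one"
    using assms(1) unfolding unimodular_def sl2_mult_def sl2_inv_def sl2_one_def
    by (cases m) (auto simp: mult.commute)
  moreover have "mob sl2_one z = z" unfolding mob_def sl2_one_def by simp
  ultimately show ?thesis using mob_sl2_mult[OF unimodular_inv[OF assms(1)] assms(2), of m] by simp
qed

section \<open>Unit-speed geodesics\<close>

definition axis_geod :: "real \<Rightarrow> complex" where
  "axis_geod t = \<i> * of_real (exp t)"

definition sl2_rot :: "real \<Rightarrow> real \<Rightarrow> sl2" where
  "sl2_rot a b = (a, b, -b, a)"

lemma Im_axis_geod_pos: "Im (axis_geod t) > 0"
  unfolding axis_geod_def by simp

lemma of_real_exp_mult_axis_geod: "of_real (exp u) * axis_geod t = axis_geod (t + u)"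
  unfolding axis_geod_def by (simp add: exp_add mult.commute mult.left_commute del: of_real_exp)

lemma unit_geodesic_Im_pos: "unit_geodesic w \<Longrightarrow> Im (w s) > 0"
  unfolding unit_geodesic_def hplane_def by auto

lemma unit_geodesic_cosh_dist: "unit_geodesic w \<Longrightarrow> cosh_dist (w s) (w t) = cosh (s - t)"
  using hdist_eq_iff[of "w s" "w t" "\<bar>s - t\<bar>"] unit_geodesic_Im_pos
  unfolding unit_geodesic_def by auto

lemma unit_geodesic_mob: "unimodular m \<Longrightarrow> unit_geodesic w \<Longrightarrow> unit_geodesic (\<lambda>s. mob m (w s))"
  using hdist_mob Im_mob_pos unfolding unit_geodesic_def hplane_def by auto

lemma unit_geodesic_axis_geod: "unit_geodesic axis_geod"
  unfolding unit_geodesic_def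
proof (intro conjI allI)
  show "axis_geod t \<in> hplane" for t using Im_axis_geod_pos unfolding hplane_def by simp
  fix s t
  have "cosh_dist (axis_geod s) (axis_geod t) = cosh (s - t)"
    unfolding cosh_dist_coords cosh_eq_exp axis_geod_def
    by (simp add: exp_diff field_simps power2_eq_square)
  then show "hdist (axis_geod s) (axis_geod t) = \<bar>s - t\<bar>"
    using hdist_eq_iff[OF Im_axis_geod_pos Im_axis_geod_pos] by simp
qed

text \<open>The two distance equations to \<open>i\<close> and \<open>i e\<close> force \<open>Im (w s) = e\<^sup>s\<close>, and then \<open>Re (w s) = 0\<close>.\<close>

lemma unit_geodesic_eq_axis_geod:
  assumes "unit_geodesic w" "w 0 = axis_geod 0" "w 1 = axis_geod 1"
  shows "w s = axis_geod s"
proof -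
  define x where "x = Re (w s)"
  define y where "y = Im (w s)"
  define E where "E = exp s"
  define q where "q = exp (1::real)"
  have y: "y > 0" using unit_geodesic_Im_pos[OF assms(1)] y_def by auto
  have E: "E > 0" "q > 1" using E_def q_def by auto
  have cosh_s_1: "cosh (s - 1) = (E / q + q / E) / 2" using cosh_eq_exp[of "s - 1"] E_def q_def
    by (simp add: exp_diff field_simps)
  have "2*q*(E*(q^2+x^2+y^2)) = 2*q*(E^2*y + q^2*y)"
    using unit_geodesic_cosh_dist[OF assms(1), of s 1] cosh_s_1 y E
    unfolding cosh_dist_coords assms(3) axis_geod_def x_def[symmetric] y_def[symmetric] q_def[symmetric]
    by (simp add: field_simps power2_eq_square)
  then have "E*(q^2+x^2+y^2) = E^2*y + q^2*y" using E by simp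
  then have at_1: "x^2 + y^2 + q^2 = y * (E + q^2 / E)"
    using E by (simp add: field_simps power2_eq_square)
  have at_0: "x^2 + y^2 + 1 = y * (E + inverse E)"
    using unit_geodesic_cosh_dist[OF assms(1), of s 0] cosh_eq_exp[of s] y E
    unfolding cosh_dist_coords assms(2) axis_geod_def x_def[symmetric] y_def[symmetric] E_def[symmetric]
    by (simp add: field_simps power2_eq_square)
  have "E * (q^2 - 1) = y * (q^2 - 1)"
    using at_0 at_1 E by (simp add: field_simps)
  moreover have "q^2 - 1 \<noteq> 0" using E
    by (metis less_irrefl one_less_power pos2 right_minus_eq)
  ultimately have "y = E" by simp
  moreover from this have "x = 0" using at_0 E by (simp add: field_simps power2_eq_square)
  ultimately show ?thesis using x_def y_def E_def by (simp add: complex_eq_iff axis_geod_def)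
qed

lemma unimodular_rot: "a^2 + b^2 = 1 \<Longrightarrow> unimodular (sl2_rot a b)"
  unfolding unimodular_def sl2_rot_def by (simp add: power2_eq_square)

lemma mob_rot_i: "a^2 + b^2 = 1 \<Longrightarrow> mob (sl2_rot a b) \<i> = \<i>"
proof -
  assume "a^2 + b^2 = 1"
  then have "of_real (-b) * \<i> + of_real a \<noteq> 0"
    using mob_denom_nonzero[of a a b "-b" \<i>] by (simp add: power2_eq_square)
  moreover have "of_real a * \<i> + of_real b = \<i> * (of_real (-b) * \<i> + of_real a)"
    by (simp add: algebra_simps)
  ultimately show ?thesis unfolding mob_def sl2_rot_def by simp
qed

lemma mob_rot_0_1_axis_geod: "mob (sl2_rot 0 1) (axis_geod t) = axis_geod (-t)"
  unfolding mob_def sl2_rot_def axis_geod_def by (simp add: field_simps exp_minus)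

lemma ex_mob_to_i:
  assumes "Im z > 0" shows "\<exists>m. unimodular m \<and> mob m z = \<i>"
proof -
  define y where "y = Im z"
  define x where "x = Re z"
  have y: "y > 0" "sqrt y > 0" using assms y_def by auto
  define m where "m = (1 / sqrt y, - x / sqrt y, 0::real, sqrt y)"
  have "mob m z = (z - of_real x) / (of_real (sqrt y) * of_real (sqrt y))"
    unfolding m_def mob_def using y by (simp add: field_simps)
  also have "\<dots> = (z - of_real x) / of_real y"
    using y by (simp flip: of_real_mult)
  also have "\<dots> = \<i>"
    using y x_def y_def by (simp add: complex_eq_iff Re_divide Im_divide power2_eq_square)
  finally have "mob m z = \<i>" .
  moreover have "unimodular m" unfolding m_def unimodular_def using y by simp
  ultimately show ?thesis by blast
qed

text \<open>The rotation by the half angle \<open>t/2\<close> with \<open>(cos t, sin t) \<sim> (1 - |u|\<^sup>2, -2 Re u)\<close>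
  moves \<open>u\<close> onto the imaginary axis.\<close>

lemma ex_rot_onto_imag_axis:
  assumes "Im u > 0"
  shows "\<exists>a b. a^2 + b^2 = 1 \<and> Re (mob (sl2_rot a b) u) = 0"
proof -
  define x where "x = Re u"
  define m where "m = (1 - (cmod u)^2) / 2"
  show ?thesis
  proof (cases "x^2 + m^2 = 0")
    case True
    then have "x = 0" by (simp add: sum_power2_eq_zero_iff)
    then show ?thesis
      by (intro exI[of _ 1] exI[of _ 0]) (simp add: sl2_rot_def mob_def x_def)
  next
    case False
    define r where "r = sqrt (x^2 + m^2)"
    have r: "r > 0" using False r_def
      by (metis add_nonneg_nonneg real_sqrt_gt_0_iff zero_le_power2 order_le_less)
    have "r^2 = x^2 + m^2" by (simp add: r_def)
    then have "(m / r)^2 + (- x / r)^2 = 1" using r False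
      by (simp add: power_divide flip: add_divide_distrib)
    then obtain t where t: "m / r = cos t" "- x / r = sin t" by (rule sincos_total_2pi)
    define a where "a = cos (t/2)"
    define b where "b = sin (t/2)"
    have ab: "a^2 + b^2 = 1" unfolding a_def b_def by simp
    have "a^2 - b^2 = m / r" using cos_double[of "t/2"] t a_def b_def by simp
    moreover have "2 * a * b = - x / r" using sin_double[of "t/2"] t a_def b_def by (simp add: mult.commute)
    ultimately have "(a^2 - b^2) * x + a * b * (2 * m) = 0" by (simp add: algebra_simps)
    moreover have "Re ((of_real a * u + of_real b) * cnj (of_real (-b) * u + of_real a))
        = (a^2 - b^2) * x + a * b * (2 * m)"
      unfolding m_def x_def cmod_power2
      by (simp add: power2_eq_square algebra_simps add_divide_distrib diff_divide_distrib)
    ultimately have "Re ((of_real a * u + of_real b) / (of_real (-b) * u + of_real a)) = 0"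
      by (simp add: Re_divide)
    then show ?thesis using ab unfolding sl2_rot_def mob_def by auto
  qed
qed

lemma imag_axis_cosh_dist_1:
  assumes "Re v = 0" "Im v > 0" "cosh_dist \<i> v = cosh 1"
  shows "v = axis_geod 1 \<or> v = axis_geod (-1)"
proof -
  define Y where "Y = Im v"
  define q where "q = exp (1::real)"
  have pos: "Y > 0" "q > 0" using assms Y_def q_def by auto
  have "1 + (1 - Y)^2 / (2 * Y) = (q + inverse q) / 2"
    using assms unfolding cosh_dist_coords cosh_eq_exp q_def[symmetric] Y_def[symmetric] by simp
  then have "2 * Y * q + q * (1 - Y)^2 = Y * (q * q + 1)"
    using pos by (simp add: field_simps)
  then have "(Y - q) * (q * Y - 1) = 0" by (simp add: algebra_simps power2_eq_square)
  then have "Y - q = 0 \<or> q * Y - 1 = 0" by simp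
  then have "Y = exp 1 \<or> Y = exp (-1)" using pos q_def by (auto simp: field_simps exp_minus)
  then show ?thesis using assms(1) Y_def by (auto simp: complex_eq_iff axis_geod_def)
qed

lemma unit_geodesic_normalize:
  assumes "unit_geodesic w"
  shows "\<exists>k. unimodular k \<and> mob k (w 0) = axis_geod 0 \<and> mob k (w 1) = axis_geod 1"
proof -
  obtain m where m: "unimodular m" "mob m (w 0) = \<i>"
    using ex_mob_to_i unit_geodesic_Im_pos[OF assms] by blast
  obtain a b where ab: "a^2 + b^2 = 1" "Re (mob (sl2_rot a b) (mob m (w 1))) = 0"
    using ex_rot_onto_imag_axis Im_mob_pos[OF m(1) unit_geodesic_Im_pos[OF assms]] by blast
  define k where "k = sl2_mult (sl2_rot a b) m"
  have k: "unimodular k" unfolding k_def using unimodular_rot[OF ab(1)] m(1) unimodular_mult by blast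
  have kw: "mob k (w s) = mob (sl2_rot a b) (mob m (w s))" for s
    unfolding k_def using mob_sl2_mult[OF m(1) unit_geodesic_Im_pos[OF assms]] .
  have k0: "mob k (w 0) = axis_geod 0" using kw m(2) mob_rot_i[OF ab(1)] by (simp add: axis_geod_def)
  have g: "unit_geodesic (\<lambda>s. mob k (w s))" using unit_geodesic_mob[OF k assms] .
  have "cosh_dist \<i> (mob k (w 1)) = cosh 1"
    using unit_geodesic_cosh_dist[OF g, of 0 1] k0 unfolding cosh_dist_def axis_geod_def
    by simp
  then have "mob k (w 1) = axis_geod 1 \<or> mob k (w 1) = axis_geod (-1)"
    using imag_axis_cosh_dist_1 ab(2) kw[of 1] unit_geodesic_Im_pos[OF g, of 1] by simp
  then show ?thesis
  proof
    assume "mob k (w 1) = axis_geod (-1)"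
    moreover have "unimodular (sl2_mult (sl2_rot 0 1) k)"
      using unimodular_mult unimodular_rot[of 0 1] k by simp
    moreover have "mob (sl2_mult (sl2_rot 0 1) k) (w s) = mob (sl2_rot 0 1) (mob k (w s))" for s
      using mob_sl2_mult[OF k unit_geodesic_Im_pos[OF assms]] .
    ultimately show ?thesis using k0 mob_rot_0_1_axis_geod[of 0] mob_rot_0_1_axis_geod[of "-1"]
      by (metis minus_zero minus_minus)
  qed (use k k0 in blast)
qed

lemma unit_geodesic_eq_mob_axis_geod:
  assumes "unit_geodesic w"
  obtains m where "unimodular m" "\<And>s. w s = mob m (axis_geod s)"
proof -
  obtain k where k: "unimodular k" "mob k (w 0) = axis_geod 0" "mob k (w 1) = axis_geod 1"
    using unit_geodesic_normalize[OF assms] by blast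
  have "mob k (w s) = axis_geod s" for s
    using unit_geodesic_eq_axis_geod[OF unit_geodesic_mob[OF k(1) assms]] k(2,3) by simp
  then have "w s = mob (sl2_inv k) (axis_geod s)" for s
    using mob_inv_left[OF k(1) unit_geodesic_Im_pos[OF assms]] by metis
  then show ?thesis using that unimodular_inv[OF k(1)] by blast
qed

definition sl2_dilation :: "real \<Rightarrow> sl2" where
  "sl2_dilation u = (exp (u/2), 0, 0, exp (-(u/2)))"

lemma unimodular_dilation: "unimodular (sl2_dilation u)"
  unfolding unimodular_def sl2_dilation_def by (simp add: exp_minus)

lemma mob_dilation: "mob (sl2_dilation u) z = of_real (exp u) * z"
proof -
  have "exp (u/2) / exp (-(u/2)) = exp u"
    by (simp add: exp_minus field_simps flip: exp_add)
  then have "(of_real (exp (u/2)) :: complex) / of_real (exp (-(u/2))) = of_real (exp u)"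
    by (metis of_real_divide)
  then show ?thesis unfolding sl2_dilation_def mob_def by (simp add: field_simps)
qed

lemma unit_geodesic_eq_mob_axis_geod_shift:
  assumes "unimodular h" "unit_geodesic c"
  obtains m where "unimodular m" "\<And>t. mob m (axis_geod t) = mob h (c (t + s))"
proof -
  obtain k where k: "unimodular k" "\<And>t. c t = mob k (axis_geod t)"
    using unit_geodesic_eq_mob_axis_geod[OF assms(2)] by blast
  define m where "m = sl2_mult (sl2_mult h k) (sl2_dilation s)"
  have "mob m (axis_geod t) = mob h (c (t + s))" for t
  proof -
    have "mob m (axis_geod t) = mob h (mob k (mob (sl2_dilation s) (axis_geod t)))"
      unfolding m_def using mob_sl2_mult[OF unimodular_dilation Im_axis_geod_pos]
        mob_sl2_mult[OF k(1) Im_mob_pos[OF unimodular_dilation Im_axis_geod_pos]] by simp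
    also have "mob (sl2_dilation s) (axis_geod t) = axis_geod (t + s)"
      unfolding mob_dilation axis_geod_def by (simp add: exp_add)
    finally show ?thesis using k(2) by simp
  qed
  then show ?thesis
    using that unimodular_mult[OF unimodular_mult[OF assms(1) k(1)] unimodular_dilation]
    unfolding m_def by blast
qed

lemma range_shift: "range (\<lambda>t. f (t + s)) = range (f :: real \<Rightarrow> 'a)"
proof -
  have "range (\<lambda>t. f (t + s)) = f ` range (\<lambda>t. t + s)" by (simp only: image_image)
  then show ?thesis by simp
qed

lemma range_reflect: "range (\<lambda>t. f (- t)) = range (f :: real \<Rightarrow> 'a)"
proof -
  have "range (\<lambda>t. f (- t)) = f ` range uminus" by (simp only: image_image)
  then show ?thesis by simp
qed

section \<open>Two crossing lifts and their translations\<close>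

lemma closed_surface_group_unimodular: "closed_surface_group G \<Longrightarrow> m \<in> G \<Longrightarrow> unimodular m"
  unfolding closed_surface_group_def unimodular_def by auto

lemma closed_surface_group_mult:
  "closed_surface_group G \<Longrightarrow> m \<in> G \<Longrightarrow> n \<in> G \<Longrightarrow> sl2_mult m n \<in> G"
  unfolding closed_surface_group_def by auto

lemma closed_surface_group_inv: "closed_surface_group G \<Longrightarrow> m \<in> G \<Longrightarrow> sl2_inv m \<in> G"
  unfolding closed_surface_group_def by auto

lemma mob_fix_i_eq_rot:
  assumes "unimodular m" "mob m \<i> = \<i>"
  obtains a b where "a^2 + b^2 = 1" "m = sl2_rot a b"
proof -
  obtain a b c d where m: "m = (a,b,c,d)" by (cases m) auto
  have det: "a*d - b*c = 1" using assms(1) m by (simp add: unimodular_def)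
  have "of_real c * \<i> + of_real d \<noteq> 0" using mob_denom_nonzero[OF det] by simp
  then have "of_real a * \<i> + of_real b = \<i> * (of_real c * \<i> + of_real d)"
    using assms(2) unfolding m mob_def by (simp add: divide_eq_eq)
  then have "b = -c" "a = d" by (simp_all add: complex_eq_iff)
  then show ?thesis using that[of a b] det m unfolding sl2_rot_def by (simp add: power2_eq_square)
qed

lemma crossing_geodesics_normal_form:
  assumes "unimodular h1" "unimodular h2" "unit_geodesic c" "mob h1 (c s1) = mob h2 (c s2)"
  obtains B a b where "unimodular B" "a^2 + b^2 = 1"
    "\<And>t. mob h1 (c (t + s1)) = mob B (mob (sl2_rot a b) (axis_geod t))"
    "\<And>t. mob h2 (c (t + s2)) = mob B (axis_geod t)"
proof -
  obtain A where A: "unimodular A" "\<And>t. mob A (axis_geod t) = mob h1 (c (t + s1))"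
    using unit_geodesic_eq_mob_axis_geod_shift[OF assms(1,3)] by blast
  obtain B where B: "unimodular B" "\<And>t. mob B (axis_geod t) = mob h2 (c (t + s2))"
    using unit_geodesic_eq_mob_axis_geod_shift[OF assms(2,3)] by blast
  define R where "R = sl2_mult (sl2_inv B) A"
  have R: "unimodular R" unfolding R_def using unimodular_mult unimodular_inv A(1) B(1) by blast
  have BR: "mob B (mob R z) = mob A z" if "Im z > 0" for z
    unfolding R_def using mob_sl2_mult[OF A(1) that] mob_inv_right[OF B(1) Im_mob_pos[OF A(1) that]]
    by simp
  have "mob A \<i> = mob B \<i>" using A(2)[of 0] B(2)[of 0] assms(4) by (simp add: axis_geod_def)
  then have "mob R \<i> = \<i>" unfolding R_def using mob_sl2_mult[OF A(1)] mob_inv_left[OF B(1)] by simp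
  then obtain a b where ab: "a^2 + b^2 = 1" "R = sl2_rot a b" using mob_fix_i_eq_rot[OF R] by blast
  show ?thesis
  proof (rule that[OF B(1) ab(1)])
    show "mob h1 (c (t + s1)) = mob B (mob (sl2_rot a b) (axis_geod t))" for t
      using A(2) BR[OF Im_axis_geod_pos] ab(2) by simp
    show "mob h2 (c (t + s2)) = mob B (axis_geod t)" for t using B(2) by simp
  qed
qed

lemma mob_translating_axis_geod:
  assumes "unimodular m" "\<And>s. mob m (axis_geod s) = axis_geod (s + l)"
  shows "mob m z = of_real (exp l) * z"
proof -
  obtain a b c d where m: "m = (a,b,c,d)" by (cases m) auto
  have det: "a*d - b*c = 1" using assms(1) m by (simp add: unimodular_def)
  define L where "L = exp l"
  have eq: "of_real a * (\<i> * of_real (exp s)) + of_real b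
      = \<i> * of_real (L * exp s) * (of_real c * (\<i> * of_real (exp s)) + of_real d)" for s
  proof -
    have "of_real c * (\<i> * of_real (exp s)) + of_real d \<noteq> 0" using mob_denom_nonzero[OF det] by simp
    moreover have "mob m (\<i> * of_real (exp s)) = \<i> * of_real (L * exp s)"
      using assms(2)[of s] L_def by (simp add: axis_geod_def exp_add mult.commute)
    ultimately show ?thesis unfolding m mob_def by (simp add: divide_eq_eq)
  qed
  have "b = - L * c" "b = - L * c * (exp 1)^2"
    using eq[of 0] eq[of 1] by (simp_all add: complex_eq_iff power2_eq_square)
  moreover have "L > 0" "(exp (1::real))^2 - 1 > 0" using L_def by auto
  ultimately have "L * c * ((exp 1)^2 - 1) = 0" by (simp add: algebra_simps)
  then have c: "c = 0" using \<open>L > 0\<close> \<open>(exp 1)^2 - 1 > 0\<close> by simp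
  then have "b = 0" using \<open>b = - L * c\<close> by simp
  moreover have "a = L * d" using eq[of 0] by (simp add: complex_eq_iff)
  moreover have "d \<noteq> 0" using det c by auto
  ultimately show ?thesis using L_def c unfolding m mob_def by simp
qed

lemma mob_conj_translation:
  assumes "unimodular T" "unimodular B" "\<And>s. mob T (mob B (axis_geod s)) = mob B (axis_geod (s + l))"
    and "Im w > 0"
  shows "mob T (mob B w) = mob B (of_real (exp l) * w)"
proof -
  define K where "K = sl2_mult (sl2_mult (sl2_inv B) T) B"
  have K: "unimodular K" unfolding K_def using assms(1,2) unimodular_mult unimodular_inv by blast
  have BK: "mob K z = mob (sl2_inv B) (mob T (mob B z))" if "Im z > 0" for z
    unfolding K_def
    using mob_sl2_mult[OF assms(2) that] mob_sl2_mult[OF assms(1) Im_mob_pos[OF assms(2) that]] by simp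
  have "mob K (axis_geod s) = axis_geod (s + l)" for s
    using BK[OF Im_axis_geod_pos] assms(3) mob_inv_left[OF assms(2) Im_axis_geod_pos] by simp
  then have "mob K w = of_real (exp l) * w" using mob_translating_axis_geod[OF K] by blast
  moreover have "mob B (mob K w) = mob T (mob B w)"
    unfolding BK[OF assms(4)]
    by (rule mob_inv_right[OF assms(2) Im_mob_pos[OF assms(1) Im_mob_pos[OF assms(2,4)]]])
  ultimately show ?thesis by simp
qed

lemma mob_inv_conj_translation:
  assumes "unimodular T" "unimodular B" "\<And>s. mob T (mob B (axis_geod s)) = mob B (axis_geod (s + l))"
    and "Im w > 0"
  shows "mob (sl2_inv T) (mob B w) = mob B (of_real (exp (-l)) * w)"
proof -
  have w': "Im (of_real (exp (-l)) * w) > 0" using assms(4) by simp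
  have "mob B w = mob T (mob B (of_real (exp (-l)) * w))"
    using mob_conj_translation[OF assms(1-3) w'] by (simp add: exp_minus field_simps)
  then have "mob (sl2_inv T) (mob B w) = mob (sl2_inv T) (mob T (mob B (of_real (exp (-l)) * w)))"
    by simp
  also have "\<dots> = mob B (of_real (exp (-l)) * w)"
    by (rule mob_inv_left[OF assms(1) Im_mob_pos[OF assms(2) w']])
  finally show ?thesis .
qed

lemma conj_translation:
  assumes "unimodular h" "unimodular g" "\<And>t. mob g (c t) = c (t + l)" "\<And>t. Im (c t) > 0"
  shows "mob (sl2_mult (sl2_mult h g) (sl2_inv h)) (mob h (c u)) = mob h (c (u + l))"
proof -
  have "mob (sl2_mult (sl2_mult h g) (sl2_inv h)) (mob h (c u))
      = mob (sl2_mult h g) (mob (sl2_inv h) (mob h (c u)))"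
    using mob_sl2_mult[OF unimodular_inv[OF assms(1)] Im_mob_pos[OF assms(1,4)]] .
  also have "\<dots> = mob h (mob g (c u))"
    using mob_inv_left[OF assms(1,4)] mob_sl2_mult[OF assms(2,4)] by simp
  finally show ?thesis using assms(3) by simp
qed

lemma crossing_lifts_normal_form:
  assumes G: "closed_surface_group G" "g \<in> G" "h1 \<in> G" "h2 \<in> G"
    and c: "unit_geodesic c" and g: "\<forall>t. mob g (c t) = c (t + l)"
    and \<alpha>: "\<alpha> = mob h1 ` range c" and \<beta>: "\<beta> = mob h2 ` range c" and p: "p \<in> \<alpha>" "p \<in> \<beta>"
  obtains B a b Ta Tb where "unimodular B" "a^2 + b^2 = 1" "Ta \<in> G" "Tb \<in> G"
    "\<alpha> = range (\<lambda>t. mob B (mob (sl2_rot a b) (axis_geod t)))"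
    "\<beta> = range (\<lambda>t. mob B (axis_geod t))"
    "\<And>t. mob Ta (mob B (mob (sl2_rot a b) (axis_geod t)))
      = mob B (mob (sl2_rot a b) (axis_geod (t + l)))"
    "\<And>t. mob Tb (mob B (axis_geod t)) = mob B (axis_geod (t + l))"
proof -
  have U: "unimodular g" "unimodular h1" "unimodular h2"
    using closed_surface_group_unimodular[OF G(1)] G(2-4) by auto
  obtain s1 s2 where "mob h1 (c s1) = mob h2 (c s2)" using p unfolding \<alpha> \<beta> by auto
  then obtain B a b where B: "unimodular B" "a^2 + b^2 = 1"
    and A: "\<And>t. mob h1 (c (t + s1)) = mob B (mob (sl2_rot a b) (axis_geod t))"
    and Bc: "\<And>t. mob h2 (c (t + s2)) = mob B (axis_geod t)"
    by (rule crossing_geodesics_normal_form[OF U(2,3) c]) (rule that)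
  define Ta where "Ta = sl2_mult (sl2_mult h1 g) (sl2_inv h1)"
  define Tb where "Tb = sl2_mult (sl2_mult h2 g) (sl2_inv h2)"
  have translate: "mob (sl2_mult (sl2_mult h g) (sl2_inv h)) (mob h (c u)) = mob h (c (u + l))"
    if "unimodular h" for h u
    by (rule conj_translation[OF that U(1)]) (use g unit_geodesic_Im_pos[OF c] in auto)
  show ?thesis
  proof (rule that[OF B, of Ta Tb])
    show "Ta \<in> G" "Tb \<in> G" unfolding Ta_def Tb_def
      by (intro closed_surface_group_mult[OF G(1)] closed_surface_group_inv[OF G(1)] G(2-4))+
    show "\<alpha> = range (\<lambda>t. mob B (mob (sl2_rot a b) (axis_geod t)))"
      using range_shift[of "\<lambda>t. mob h1 (c t)" s1] unfolding A \<alpha> by (simp add: image_image)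
    show "\<beta> = range (\<lambda>t. mob B (axis_geod t))"
      using range_shift[of "\<lambda>t. mob h2 (c t)" s2] unfolding Bc \<beta> by (simp add: image_image)
    show "mob Ta (mob B (mob (sl2_rot a b) (axis_geod t)))
      = mob B (mob (sl2_rot a b) (axis_geod (t + l)))" for t
    proof -
      have "mob Ta (mob h1 (c (t + s1))) = mob h1 (c ((t + l) + s1))"
        unfolding Ta_def using translate[OF U(2)] by (simp add: ac_simps)
      then show ?thesis unfolding A .
    qed
    show "mob Tb (mob B (axis_geod t)) = mob B (axis_geod (t + l))" for t
    proof -
      have "mob Tb (mob h2 (c (t + s2))) = mob h2 (c ((t + l) + s2))"
        unfolding Tb_def using translate[OF U(3)] by (simp add: ac_simps)
      then show ?thesis unfolding Bc .
    qed
  qed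
qed

section \<open>The crossing estimate\<close>

lemma systole_le_displacement:
  assumes "closed_surface_group G" "k \<in> G" "Im z > 0" "mob k z \<noteq> z"
  shows "systole G \<le> hdist z (mob k z)"
  unfolding systole_def
proof (rule cInf_lower)
  show "hdist z (mob k z) \<in> {hdist z (mob m z) | m z. m \<in> G \<and> nontrivial_elt m \<and> z \<in> hplane}"
    using assms(2-4) unfolding nontrivial_elt_def hplane_def by blast
  show "bdd_below {hdist z (mob m z) | m z. m \<in> G \<and> nontrivial_elt m \<and> z \<in> hplane}"
    using hdist_nonneg Im_mob_pos closed_surface_group_unimodular[OF assms(1)]
    unfolding hplane_def by (intro bdd_belowI[of _ 0]) fastforce
qed

lemma rot_denom_pos:
  fixes a b E :: real
  assumes "a^2 + b^2 = 1" "E > 0"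
  shows "a^2 + b^2 * E^2 > 0"
proof -
  have "a \<noteq> 0 \<or> b * E \<noteq> 0" using assms by auto
  then have "a^2 + (b * E)^2 > 0" by (simp add: sum_power2_gt_zero_iff)
  then show ?thesis by (simp add: power_mult_distrib)
qed

lemma mob_rot_imag_axis:
  assumes "a^2 + b^2 = 1" "E > 0"
  shows "mob (sl2_rot a b) (\<i> * of_real E)
    = Complex (a*b*(1-E^2) / (a^2+b^2*E^2)) (E / (a^2+b^2*E^2))"
  unfolding mob_def sl2_rot_def using rot_denom_pos[OF assms] assms(1)
  by (simp add: complex_eq_iff Re_divide Im_divide power2_eq_square algebra_simps)
     (metis distrib_left mult_1_right)

text \<open>The right-hand side is \<open>cosh (4 arsinh (|b| sinh s))\<close>, cf. \<open>cosh_times_4\<close>.\<close>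

lemma cosh_dist_rot_axis_geod_translate:
  assumes ab: "a^2 + b^2 = 1"
  shows "cosh_dist (mob (sl2_rot a b) (axis_geod (-s)))
      (of_real (exp (- (2 * s))) * mob (sl2_rot a b) (axis_geod s))
    = 1 + 8 * (b^2 * (sinh s)^2) * (1 + b^2 * (sinh s)^2)"
proof -
  define E where "E = exp s"
  define P where "P = a^2*E^2 + b^2"
  define Q where "Q = a^2 + b^2*E^2"
  have E: "E > 0" using E_def by simp
  have Q: "Q > 0" using rot_denom_pos[OF ab E] Q_def by simp
  have P_inv: "a^2 + b^2 * (inverse E)^2 = P / E^2" using E unfolding P_def by (simp add: field_simps)
  have P: "P > 0" using rot_denom_pos[OF ab, of "inverse E"] E P_inv by (simp add: field_simps)
  have "mob (sl2_rot a b) (axis_geod (-s))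
      = Complex (a*b*(1-(inverse E)^2) / (P / E^2)) (inverse E / (P / E^2))"
    using mob_rot_imag_axis[OF ab, of "inverse E"] E P_inv
    by (simp add: axis_geod_def E_def exp_minus)
  also have "\<dots> = Complex (a*b*(E^2-1)/P) (E/P)"
    using E P by (simp add: field_simps power2_eq_square)
  finally have x: "mob (sl2_rot a b) (axis_geod (-s)) = Complex (a*b*(E^2-1)/P) (E/P)" .
  have exp_2s: "exp (- (2 * s)) = inverse (E^2)"
    unfolding E_def by (simp add: exp_minus power2_eq_square flip: exp_add)
  then have y: "of_real (exp (- (2 * s))) * mob (sl2_rot a b) (axis_geod s)
      = Complex (- a*b*(E^2-1)/(E^2*Q)) (1/(E*Q))"
    using mob_rot_imag_axis[OF ab E] E unfolding Q_def[symmetric] exp_2s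
    by (simp add: axis_geod_def E_def[symmetric] complex_eq_iff field_simps power2_eq_square)
  have numerator: "a^2*b^2*(E^2-1)^2*(E^2*Q+P)^2 + E^2*(E^2*Q-P)^2
      = P*Q*b^2*(E^2-1)^2*(4*E^2+b^2*(E^2-1)^2)"
    unfolding P_def Q_def using ab by algebra
  have sinh_s: "(sinh s)^2 = (E^2-1)^2/(4*E^2)"
    unfolding sinh_eq_exp E_def[symmetric] using E by (simp add: field_simps power2_eq_square)
  have "cosh_dist (Complex (a*b*(E^2-1)/P) (E/P)) (Complex (- a*b*(E^2-1)/(E^2*Q)) (1/(E*Q)))
      = 1 + ((a*b*(E^2-1)/P + a*b*(E^2-1)/(E^2*Q))^2 + (E/P - 1/(E*Q))^2) / (2*(E/P)*(1/(E*Q)))"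
    unfolding cosh_dist_coords by simp
  also have "\<dots> = 1 + (a^2*b^2*(E^2-1)^2*(E^2*Q+P)^2 + E^2*(E^2*Q-P)^2) / (2*E^4*P*Q)"
    using E P Q by (simp add: field_simps power2_eq_square, algebra)
  also have "\<dots> = 1 + P*Q*b^2*(E^2-1)^2*(4*E^2+b^2*(E^2-1)^2) / (2*E^4*P*Q)"
    unfolding numerator ..
  also have "\<dots> = 1 + 8 * (b^2 * (sinh s)^2) * (1 + b^2 * (sinh s)^2)"
    unfolding sinh_s using E P Q by (simp add: field_simps power2_eq_square, algebra)
  finally show ?thesis using x y by simp
qed

lemma cosh_dist_imag_axis_ge:
  assumes "Im z > 0" "y > 0"
  shows "(cosh_dist z (\<i> * of_real y))^2 \<ge> 1 + (Re z / Im z)^2"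
proof -
  define X where "X = Re z"
  define Y where "Y = Im z"
  have Y: "Y > 0" using assms Y_def by simp
  have "cosh_dist z (\<i> * of_real y) = (X^2 + Y^2 + y^2) / (2*Y*y)"
    unfolding cosh_dist_coords X_def[symmetric] Y_def[symmetric] using Y assms(2)
    by (simp add: field_simps power2_eq_square)
  moreover have "(X^2 + Y^2 + y^2)^2 \<ge> 4*y^2*(X^2+Y^2)"
  proof -
    have "(X^2 + Y^2 + y^2)^2 - 4*y^2*(X^2+Y^2) = (X^2+Y^2-y^2)^2"
      by (simp add: power2_eq_square algebra_simps)
    then show ?thesis by (metis diff_ge_0_iff_ge zero_le_power2)
  qed
  then have "((X^2 + Y^2 + y^2) / (2*Y*y))^2 \<ge> (4*y^2*(X^2+Y^2)) / (2*Y*y)^2"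
    by (simp add: power_divide divide_right_mono)
  moreover have "(4*y^2*(X^2+Y^2)) / (2*Y*y)^2 = 1 + (X/Y)^2"
    using Y assms(2) by (simp add: field_simps power2_eq_square)
  ultimately show ?thesis using X_def Y_def by simp
qed

lemma Re_div_Im_rot_axis_geod:
  assumes "a^2 + b^2 = 1"
  shows "(Re (mob (sl2_rot a b) (axis_geod t)) / Im (mob (sl2_rot a b) (axis_geod t)))^2
    = 4*a^2*b^2*(sinh t)^2"
proof -
  define E where "E = exp t"
  have E: "E > 0" using E_def by simp
  have "Re (mob (sl2_rot a b) (axis_geod t)) / Im (mob (sl2_rot a b) (axis_geod t)) = a*b*(1-E^2)/E"
    using mob_rot_imag_axis[OF assms E] rot_denom_pos[OF assms E] E
    by (simp add: axis_geod_def E_def)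
  also have "\<dots> = -(2*a*b) * sinh t"
    unfolding sinh_eq_exp E_def[symmetric] using E by (simp add: field_simps power2_eq_square)
  finally show ?thesis by (simp add: power_mult_distrib)
qed

text \<open>The distance from the point at parameter \<open>t\<close> of the rotated axis to the imaginary axis
  is \<open>arsinh (2 |a b| |sinh t|)\<close>.\<close>

lemma hdist_rot_axis_geod_imag_axis:
  assumes "a^2 + b^2 = 1" "hdist (mob (sl2_rot a b) (axis_geod t)) (axis_geod s) < r"
  shows "4*a^2*b^2*(sinh t)^2 < (sinh r)^2"
proof -
  define w where "w = mob (sl2_rot a b) (axis_geod t)"
  have w: "Im w > 0" unfolding w_def using Im_mob_pos[OF unimodular_rot[OF assms(1)] Im_axis_geod_pos] .
  have "r > 0" using hdist_nonneg[OF w Im_axis_geod_pos, of s] assms(2) unfolding w_def by linarith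
  then have "cosh_dist w (axis_geod s) < cosh r"
    using hdist_less_iff[OF w Im_axis_geod_pos] assms(2) unfolding w_def by simp
  then have "(cosh_dist w (axis_geod s))^2 < (cosh r)^2"
    using cosh_dist_ge_1[OF w Im_axis_geod_pos, of s] by (intro power_strict_mono) auto
  then have "1 + (Re w / Im w)^2 < (cosh r)^2"
    using cosh_dist_imag_axis_ge[OF w, of "exp s"] by (simp add: axis_geod_def)
  then show ?thesis using Re_div_Im_rot_axis_geod[OF assms(1), of t] unfolding w_def[symmetric]
    by (simp add: cosh_square_eq)
qed

lemma cosh_hdist_inv_translation_translation:
  assumes T: "unimodular Ta" "unimodular Tb" and B: "unimodular B" and ab: "a^2 + b^2 = 1"
    and Ta: "\<And>t. mob Ta (mob B (mob (sl2_rot a b) (axis_geod t)))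
      = mob B (mob (sl2_rot a b) (axis_geod (t + l)))"
    and Tb: "\<And>t. mob Tb (mob B (axis_geod t)) = mob B (axis_geod (t + l))"
  defines "z \<equiv> mob B (mob (sl2_rot a b) (axis_geod (- (l/2))))"
  shows "cosh (hdist z (mob (sl2_mult (sl2_inv Tb) Ta) z))
    = 1 + 8 * (b^2 * (sinh (l/2))^2) * (1 + b^2 * (sinh (l/2))^2)"
proof -
  define R where "R = sl2_rot a b"
  define s where "s = l / 2"
  have Rpos: "Im (mob R (axis_geod t)) > 0" for t
    unfolding R_def using Im_mob_pos[OF unimodular_rot[OF ab] Im_axis_geod_pos] .
  have z: "Im z > 0" unfolding z_def R_def[symmetric] using Im_mob_pos[OF B Rpos] .
  have "mob Ta z = mob B (mob R (axis_geod s))"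
    using Ta[of "-s"] unfolding z_def R_def s_def by simp
  then have "mob (sl2_mult (sl2_inv Tb) Ta) z = mob (sl2_inv Tb) (mob B (mob R (axis_geod s)))"
    using mob_sl2_mult[OF T(1) z] by simp
  also have "\<dots> = mob B (of_real (exp (- (2 * s))) * mob R (axis_geod s))"
    using mob_inv_conj_translation[OF T(2) B Tb Rpos] unfolding s_def by simp
  finally have "hdist z (mob (sl2_mult (sl2_inv Tb) Ta) z)
      = hdist (mob R (axis_geod (-s))) (of_real (exp (- (2 * s))) * mob R (axis_geod s))"
    unfolding z_def R_def[symmetric] s_def[symmetric] using hdist_mob[OF B Rpos] Rpos[of s]
    by (simp del: of_real_exp)
  then show ?thesis
    using cosh_hdist Rpos cosh_dist_rot_axis_geod_translate[OF ab, of s]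
    unfolding R_def s_def by (simp del: of_real_exp)
qed

text \<open>The element \<open>Tb\<^sup>-\<^sup>1 Ta\<close> moves the point of the rotated axis at parameter \<open>-l/2\<close>
  by a distance \<open>d\<close> with \<open>sinh (d/4) = |b| sinh (l/2)\<close>; since it is nontrivial, \<open>d\<close> is at
  least the systole, hence more than \<open>8 \<epsilon>\<close>.\<close>

lemma crossing_translations_bound_b_le_a:
  assumes G: "closed_surface_group G" "Ta \<in> G" "Tb \<in> G" and B: "unimodular B"
    and ab: "a^2 + b^2 = 1" "b \<noteq> 0" "b^2 \<le> a^2" and "l > 0" "\<epsilon> \<ge> 0" "8 * \<epsilon> < systole G"
    and Ta: "\<And>t. mob Ta (mob B (mob (sl2_rot a b) (axis_geod t)))
      = mob B (mob (sl2_rot a b) (axis_geod (t + l)))"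
    and Tb: "\<And>t. mob Tb (mob B (axis_geod t)) = mob B (axis_geod (t + l))"
  shows "(sinh (2 * \<epsilon>))^2 \<le> 2 * a^2 * b^2 * (sinh (l/2))^2"
proof (rule ccontr)
  assume "\<not> ?thesis"
  then have small: "2 * a^2 * b^2 * (sinh (l/2))^2 < (sinh (2 * \<epsilon>))^2" by simp
  define u where "u = b^2 * (sinh (l/2))^2"
  define S where "S = (sinh (2 * \<epsilon>))^2"
  define z where "z = mob B (mob (sl2_rot a b) (axis_geod (- (l/2))))"
  define k where "k = sl2_mult (sl2_inv Tb) Ta"
  have k: "k \<in> G" unfolding k_def using G closed_surface_group_mult closed_surface_group_inv by blast
  have z: "Im z > 0"
    unfolding z_def using Im_mob_pos[OF B Im_mob_pos[OF unimodular_rot[OF ab(1)] Im_axis_geod_pos]] .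
  have T: "unimodular Ta" "unimodular Tb" using G(2,3) closed_surface_group_unimodular[OF G(1)] by auto
  have cosh_d: "cosh (hdist z (mob k z)) = 1 + 8 * u * (1 + u)"
    unfolding z_def k_def u_def by (rule cosh_hdist_inv_translation_translation[OF T B ab(1) Ta Tb])
  have "u > 0" unfolding u_def using ab(2) \<open>l > 0\<close> by simp
  moreover have "u \<le> 2 * a^2 * b^2 * (sinh (l/2))^2"
    using ab mult_right_mono[of 1 "2*a^2" "b^2 * (sinh (l/2))^2"] unfolding u_def
    by (simp add: algebra_simps)
  ultimately have "u < S" using small unfolding S_def by linarith
  then have "1 + 8 * u * (1 + u) < 1 + 8 * S * (1 + S)"
    using \<open>u > 0\<close> by (simp add: mult_strict_mono)
  also have "\<dots> = cosh (8 * \<epsilon>)" using cosh_times_4[of "2 * \<epsilon>"] unfolding S_def by simp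
  finally have "cosh (hdist z (mob k z)) < cosh (8 * \<epsilon>)" using cosh_d by simp
  moreover have "hdist z (mob k z) \<ge> 0"
    using hdist_nonneg[OF z Im_mob_pos[OF closed_surface_group_unimodular[OF G(1) k] z]] .
  ultimately have "hdist z (mob k z) < 8 * \<epsilon>"
    using cosh_real_nonneg_less_iff \<open>\<epsilon> \<ge> 0\<close> by simp
  moreover have "mob k z \<noteq> z"
  proof
    assume "mob k z = z"
    then have "8 * u * (1 + u) = 0" using cosh_d hdist_self[of z] by simp
    then show False using \<open>u > 0\<close> by simp
  qed
  ultimately show False using systole_le_displacement[OF G(1) k z] \<open>8 * \<epsilon> < systole G\<close> by simp
qed

lemma mob_rot_0_1_rot:
  assumes "a^2 + b^2 = 1" "Im z > 0"
  shows "mob (sl2_rot 0 1) (mob (sl2_rot b (-a)) z) = mob (sl2_rot a b) z"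
proof -
  have "unimodular (sl2_rot b (-a))" using unimodular_rot[of b "-a"] assms(1) by simp
  moreover have "sl2_mult (sl2_rot 0 1) (sl2_rot b (-a)) = sl2_rot a b"
    unfolding sl2_mult_def sl2_rot_def by simp
  ultimately show ?thesis using mob_sl2_mult[OF _ assms(2), of "sl2_rot b (-a)" "sl2_rot 0 1"] by simp
qed

text \<open>The case \<open>a\<^sup>2 < b\<^sup>2\<close> reduces to the previous one by reversing the orientation of the
  imaginary axis: replace \<open>B\<close> by \<open>B J\<close> with \<open>J z = -1/z\<close>, and \<open>Tb\<close> by its inverse.\<close>

lemma crossing_translations_bound:
  assumes G: "closed_surface_group G" "Ta \<in> G" "Tb \<in> G" and B: "unimodular B"
    and ab: "a^2 + b^2 = 1" "a \<noteq> 0" "b \<noteq> 0" and "l > 0" "\<epsilon> \<ge> 0" "8 * \<epsilon> < systole G"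
    and Ta: "\<And>t. mob Ta (mob B (mob (sl2_rot a b) (axis_geod t)))
      = mob B (mob (sl2_rot a b) (axis_geod (t + l)))"
    and Tb: "\<And>t. mob Tb (mob B (axis_geod t)) = mob B (axis_geod (t + l))"
  shows "(sinh (2 * \<epsilon>))^2 \<le> 2 * a^2 * b^2 * (sinh (l/2))^2"
proof (cases "b^2 \<le> a^2")
  case True
  show ?thesis by (rule crossing_translations_bound_b_le_a[OF G B ab(1,3) True assms(8-12)])
next
  case False
  define B' where "B' = sl2_mult B (sl2_rot 0 1)"
  have J: "unimodular (sl2_rot 0 1)" using unimodular_rot[of 0 1] by simp
  have B': "unimodular B'" unfolding B'_def using unimodular_mult[OF B J] .
  have B'_mob: "mob B' w = mob B (mob (sl2_rot 0 1) w)" if "Im w > 0" for w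
    unfolding B'_def using mob_sl2_mult[OF J that] .
  have B'_axis: "mob B' (axis_geod t) = mob B (axis_geod (-t))" for t
    using B'_mob[OF Im_axis_geod_pos] mob_rot_0_1_axis_geod by simp
  have B'_rot: "mob B' (mob (sl2_rot b (-a)) z) = mob B (mob (sl2_rot a b) z)" if "Im z > 0" for z
    using B'_mob[OF Im_mob_pos[OF _ that]] mob_rot_0_1_rot[OF ab(1) that] unimodular_rot[of b "-a"] ab(1)
    by (simp add: add.commute)
  have Tb_inv: "unimodular (sl2_inv Tb)" "sl2_inv Tb \<in> G"
    using G closed_surface_group_unimodular closed_surface_group_inv by blast+
  have "mob (sl2_inv Tb) (mob B' (axis_geod t)) = mob B' (axis_geod (t + l))" for t
    unfolding B'_axis
    using mob_inv_conj_translation[OF closed_surface_group_unimodular[OF G(1,3)] B Tb Im_axis_geod_pos]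
      of_real_exp_mult_axis_geod[of "-l" "-t"]
    by (simp add: algebra_simps del: of_real_exp)
  moreover have "b^2 + (-a)^2 = 1" "-a \<noteq> 0" "(-a)^2 \<le> b^2" using ab False by auto
  moreover have "mob Ta (mob B' (mob (sl2_rot b (-a)) (axis_geod t)))
      = mob B' (mob (sl2_rot b (-a)) (axis_geod (t + l)))" for t
    using Ta B'_rot[OF Im_axis_geod_pos] by simp
  ultimately have "(sinh (2 * \<epsilon>))^2 \<le> 2 * b^2 * (-a)^2 * (sinh (l/2))^2"
    by (intro crossing_translations_bound_b_le_a[OF G(1,2) Tb_inv(2) B' _ _ _ assms(8-10)])
  then show ?thesis by (simp add: algebra_simps)
qed

section \<open>Traps\<close>

lemma range_rot_axis_geod_degenerate:
  assumes "a^2 + b^2 = 1" "a = 0 \<or> b = 0"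
  shows "range (\<lambda>t. mob (sl2_rot a b) (axis_geod t)) = range axis_geod"
proof (cases "b = 0")
  case True
  then have "a \<noteq> 0" using assms(1) by auto
  then have "mob (sl2_rot a b) z = z" for z using True unfolding mob_def sl2_rot_def by simp
  then show ?thesis by simp
next
  case False
  then have "mob (sl2_rot a b) (axis_geod t) = axis_geod (- t)" for t
    using assms(2) unfolding mob_def sl2_rot_def axis_geod_def by (simp add: field_simps exp_minus)
  then show ?thesis using range_reflect[of axis_geod] by simp
qed

lemma seg_length_le:
  assumes "X \<noteq> {}" "\<And>x y. x \<in> X \<Longrightarrow> y \<in> X \<Longrightarrow> hdist x y \<le> d"
  shows "seg_length X \<le> d"
  unfolding seg_length_def
proof (rule cSup_least)
  obtain x where "x \<in> X" using assms(1) by blast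
  then show "{hdist x y |x y. x \<in> X \<and> y \<in> X} \<noteq> {}" by blast
qed (use assms(2) in blast)

lemma hdist_rot_axis_geod_param_lt:
  assumes B: "unimodular B" and ab: "a^2 + b^2 = 1" and "l > 0"
    and bound: "(sinh (2 * \<epsilon>))^2 \<le> 2 * a^2 * b^2 * (sinh (l/2))^2"
    and near: "hdist (mob B (mob (sl2_rot a b) (axis_geod t))) (mob B (axis_geod s)) < 2 * \<epsilon>"
  shows "\<bar>t\<bar> < l/2"
proof (rule ccontr)
  assume "\<not> \<bar>t\<bar> < l/2"
  then have "sinh (l/2) \<le> sinh \<bar>t\<bar>" by (simp only: sinh_real_le_iff not_less)
  then have "(sinh (l/2))^2 \<le> (sinh t)^2"
    using \<open>l > 0\<close> by (metis power2_abs power_mono sinh_real_abs sinh_real_pos_iff less_imp_le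
        half_gt_zero)
  then have "4*a^2*b^2*(sinh (l/2))^2 \<le> 4*a^2*b^2*(sinh t)^2" by (simp add: mult_left_mono)
  moreover have "hdist (mob (sl2_rot a b) (axis_geod t)) (axis_geod s) < 2 * \<epsilon>"
    using near hdist_mob[OF B Im_mob_pos[OF unimodular_rot[OF ab(1)] Im_axis_geod_pos, of t]
      Im_axis_geod_pos, of s]
    by simp
  then have "4*a^2*b^2*(sinh t)^2 < (sinh (2 * \<epsilon>))^2"
    by (rule hdist_rot_axis_geod_imag_axis[OF ab(1)])
  moreover have "0 \<le> 2*a^2*b^2*(sinh (l/2))^2" by simp
  ultimately show False using bound by linarith
qed

lemma trap_length_le_period:
  assumes G: "closed_surface_group G" "g \<in> G" "h1 \<in> G" "h2 \<in> G"
    and c: "unit_geodesic c" and "l > 0" and g: "\<forall>t. mob g (c t) = c (t + l)"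
    and \<alpha>: "\<alpha> = mob h1 ` range c" and \<beta>: "\<beta> = mob h2 ` range c"
    and "\<alpha> \<noteq> \<beta>" "p \<in> \<alpha>" "p \<in> \<beta>" and "\<epsilon> > 0" "8 * \<epsilon> < systole G"
  shows "seg_length (trap \<alpha> \<beta> \<epsilon>) \<le> l"
proof -
  obtain B a b Ta Tb where B: "unimodular B" and ab: "a^2 + b^2 = 1" and T: "Ta \<in> G" "Tb \<in> G"
    and \<alpha>B: "\<alpha> = range (\<lambda>t. mob B (mob (sl2_rot a b) (axis_geod t)))"
    and \<beta>B: "\<beta> = range (\<lambda>t. mob B (axis_geod t))"
    and Ta: "\<And>t. mob Ta (mob B (mob (sl2_rot a b) (axis_geod t)))
      = mob B (mob (sl2_rot a b) (axis_geod (t + l)))"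
    and Tb: "\<And>t. mob Tb (mob B (axis_geod t)) = mob B (axis_geod (t + l))"
    by (rule crossing_lifts_normal_form[OF G c g \<alpha> \<beta> \<open>p \<in> \<alpha>\<close> \<open>p \<in> \<beta>\<close>]) (rule that)
  have "\<alpha> = mob B ` range (\<lambda>t. mob (sl2_rot a b) (axis_geod t))" "\<beta> = mob B ` range axis_geod"
    unfolding \<alpha>B \<beta>B by (simp_all add: image_image)
  then have "\<alpha> = \<beta>" if "a = 0 \<or> b = 0"
    using range_rot_axis_geod_degenerate[OF ab that] by simp
  then have ab0: "a \<noteq> 0" "b \<noteq> 0" using \<open>\<alpha> \<noteq> \<beta>\<close> by auto
  have bound: "(sinh (2 * \<epsilon>))^2 \<le> 2 * a^2 * b^2 * (sinh (l/2))^2"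
    using crossing_translations_bound[OF G(1) T B ab ab0 \<open>l > 0\<close> _ _ Ta Tb] assms(13,14) by simp
  have param: "\<exists>t. x = mob B (mob (sl2_rot a b) (axis_geod t)) \<and> \<bar>t\<bar> < l/2"
    if x: "x \<in> trap \<alpha> \<beta> \<epsilon>" for x
  proof -
    obtain t s where "x = mob B (mob (sl2_rot a b) (axis_geod t))"
      and "hdist (mob B (mob (sl2_rot a b) (axis_geod t))) (mob B (axis_geod s)) < 2 * \<epsilon>"
      using x unfolding trap_def \<alpha>B \<beta>B by blast
    then show ?thesis using hdist_rot_axis_geod_param_lt[OF B ab \<open>l > 0\<close> bound] by blast
  qed
  have "unit_geodesic (\<lambda>t. mob B (mob (sl2_rot a b) (axis_geod t)))"
    using unit_geodesic_mob[OF B unit_geodesic_mob[OF unimodular_rot[OF ab] unit_geodesic_axis_geod]] .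
  then have along: "hdist (mob B (mob (sl2_rot a b) (axis_geod t)))
      (mob B (mob (sl2_rot a b) (axis_geod t'))) = \<bar>t - t'\<bar>" for t t'
    unfolding unit_geodesic_def by blast
  have "p \<in> trap \<alpha> \<beta> \<epsilon>"
    unfolding trap_def using assms(11-13) hdist_self[of p] by (auto intro!: bexI[of _ p])
  then show ?thesis
  proof (intro seg_length_le)
    fix x y assume "x \<in> trap \<alpha> \<beta> \<epsilon>" "y \<in> trap \<alpha> \<beta> \<epsilon>"
    then obtain t t' where "x = mob B (mob (sl2_rot a b) (axis_geod t))" "\<bar>t\<bar> < l/2"
      and "y = mob B (mob (sl2_rot a b) (axis_geod t'))" "\<bar>t'\<bar> < l/2"
      using param by blast
    then show "hdist x y \<le> l" using along by simp
  qed blast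
qed

theorem lemma3p1:
  fixes G :: "sl2 set" and g h1 h2 :: sl2 and c :: "real \<Rightarrow> complex"
    and l \<epsilon> :: real and p :: complex and \<alpha> \<beta> :: "complex set"
  assumes "closed_surface_group G"
    and "g \<in> G" and "h1 \<in> G" and "h2 \<in> G"
    and "unit_geodesic c" and "l > 0" and "\<forall>t. mob g (c t) = c (t + l)"
    and "\<alpha> = mob h1 ` range c" and "\<beta> = mob h2 ` range c"
    and "\<alpha> \<noteq> \<beta>" and "p \<in> \<alpha>" and "p \<in> \<beta>"
    and "\<epsilon> > 0" and "8 * \<epsilon> < systole G"
  shows "seg_length (trap \<alpha> \<beta> \<epsilon>) < l + 4 * \<epsilon> \<and>
         seg_length (trap \<beta> \<alpha> \<epsilon>) < l + 4 * \<epsilon>"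
proof -
  have "seg_length (trap \<alpha> \<beta> \<epsilon>) \<le> l"
    using trap_length_le_period[OF assms] .
  moreover have "seg_length (trap \<beta> \<alpha> \<epsilon>) \<le> l"
    using trap_length_le_period[OF assms(1,2,4,3,5-7,9,8) assms(10)[symmetric] assms(12,11,13,14)] .
  ultimately show ?thesis using \<open>\<epsilon> > 0\<close> by simp
qed

end
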